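(* Assume the setting described in the context. Let $P$ be the p-matrix with data $(\mathbf a,\mathbf b,\mathbf c,\mathbf d,E,F,G,H)$ such that $F(\mathbf k)\le\widehat\alpha\mathbf k$ and $H(\boldsymbol\ell)\le\widehat\beta\boldsymbol\ell$ for all $\mathbf k,\boldsymbol\ell$ in the respective blocks, and let $(\boldsymbol\kappa;\boldsymbol\lambda;\sigma)\in\mathcal C$. Then the subset $P(\vartheta)=\{\mathbf p\in P:\mathbf p-(\boldsymbol\kappa;\boldsymbol\lambda;\sigma)\in\mathcal C\}$ (the elements of $P$ divisible by $\vartheta=(\alpha^{\boldsymbol\kappa},\beta^{\boldsymbol\lambda})^{(\sigma)}$) is the p-matrix with data $(\mathbf a',\mathbf b,\mathbf c',\mathbf d,E',F',G',H')$, where (maxima of vectors taken componentwise) $\mathbf a'=\max\{\mathbf a,\boldsymbol\kappa\}$, $\mathbf c'=\max\{\mathbf c,\boldsymbol\lambda\}$, $E'(\mathbf k)=\max\{E(\mathbf k),\sigma\}$, $F'(\mathbf k)=\min\{F(\mathbf k),\widehat\alpha(\mathbf k-\boldsymbol\kappa)+\sigma\}$, $G'(\boldsymbol\ell)=\max\{G(\boldsymbol\ell),\sigma\}$, $H'(\boldsymbol\ell)=\min\{H(\boldsymbol\ell),\widehat\beta(\boldsymbol\ell-\boldsymbol\lambda)+\sigma\}$.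
   Context: $\mathbb N=\{0,1,2,\dots\}$. Fix integers $p,q\ge1$, nonnegative integer weight vectors $\widehat\alpha=(\widehat\alpha_1,\dots,\widehat\alpha_p)$, $\widehat\beta=(\widehat\beta_1,\dots,\widehat\beta_q)$ (the weights of Hilbert bases $\alpha,\beta$ of two algebras of $\mathfrak{sl}_2$-seminvariants), and write $\widehat\alpha\mathbf k=\sum\widehat\alpha_ik_i$, $\widehat\beta\boldsymbol\ell=\sum\widehat\beta_j\ell_j$. The transvectant cone is $\mathcal C=\{(\mathbf k;\boldsymbol\ell;s)\in\mathbb N^{p+q+1}:s\le\widehat\alpha\mathbf k,\ s\le\widehat\beta\boldsymbol\ell\}$; $(\mathbf k;\boldsymbol\ell;s)$ represents the transvectant $(\alpha^{\mathbf k},\beta^{\boldsymbol\ell})^{(s)}$. Nonnegative integer intervals: for $a\in\mathbb Z$, $b\in\mathbb Z\cup\{\infty\}$, $[a,b]=\{j\in\mathbb N:a\le j\le b\}$ (with $j<\infty$ if $b=\infty$); negative endpoints are allowed. For vectors, the block $[\mathbf a,\mathbf b]=[a_1,b_1]\times\cdots\times[a_p,b_p]$. A p-matrix with data $(\mathbf a,\mathbf b,\mathbf c,\mathbf d,E,F,G,H)$, where $\mathbf a\in\mathbb Z^p$, $\mathbf b\in(\mathbb Z\cup\{\infty\})^p$, $\mathbf c\in\mathbb Z^q$, $\mathbf d\in(\mathbb Z\cup\{\infty\})^q$, $E,F$ integer-valued functions on $[\mathbf a,\mathbf b]$ and $G,H$ integer-valued functions on $[\mathbf c,\mathbf d]$,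 denotes the set $\{(\mathbf k;\boldsymbol\ell;s)\in\mathbb N^{p+q+1}:\mathbf k\in[\mathbf a,\mathbf b],\ \boldsymbol\ell\in[\mathbf c,\mathbf d],\ s\in[E(\mathbf k),F(\mathbf k)]\cap[G(\boldsymbol\ell),H(\boldsymbol\ell)]\}$. *)

theory Defs
  imports Main
begin

text \<open>Vectors in N^p are nat lists of length p; elements of N^(p+q+1) are triples
 (k, l, s). Integer interval endpoints: lower endpoints are ints, upper endpoints are
 int option, with None standing for infinity.\<close>

definition in_ival :: "int \<Rightarrow> int option \<Rightarrow> nat \<Rightarrow> bool" where
  "in_ival a b j \<longleftrightarrow> a \<le> int j \<and> (case b of None \<Rightarrow> True | Some b' \<Rightarrow> int j \<le> b')"

definition in_block :: "int list \<Rightarrow> int option list \<Rightarrow> nat list \<Rightarrow> bool" where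
  "in_block a b k \<longleftrightarrow> length k = length a \<and> (\<forall>i<length a. in_ival (a!i) (b!i) (k!i))"

definition wdot :: "nat list \<Rightarrow> nat list \<Rightarrow> nat" where
  "wdot w k = (\<Sum>i<length w. w!i * k!i)"

text \<open>Integer version, used for alpha-hat (k - kappa) which may a priori be negative.\<close>
definition wdot_int :: "nat list \<Rightarrow> nat list \<Rightarrow> nat list \<Rightarrow> int" where
  "wdot_int w k \<kappa> = (\<Sum>i<length w. int (w!i) * (int (k!i) - int (\<kappa>!i)))"

definition tcone :: "nat list \<Rightarrow> nat list \<Rightarrow> (nat list \<times> nat list \<times> nat) set" where
  "tcone \<alpha> \<beta> = {(k, l, s). length k = length \<alpha> \<and> length l = length \<beta> \<and>
                      s \<le> wdot \<alpha> k \<and> s \<le> wdot \<beta> l}"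

definition pmatrix :: "int list \<Rightarrow> int option list \<Rightarrow> int list \<Rightarrow> int option list \<Rightarrow>
    (nat list \<Rightarrow> int) \<Rightarrow> (nat list \<Rightarrow> int) \<Rightarrow> (nat list \<Rightarrow> int) \<Rightarrow> (nat list \<Rightarrow> int) \<Rightarrow>
    (nat list \<times> nat list \<times> nat) set" where
  "pmatrix a b c d E F G H = {(k, l, s). in_block a b k \<and> in_block c d l \<and>
      E k \<le> int s \<and> int s \<le> F k \<and> G l \<le> int s \<and> int s \<le> H l}"

definition vadd :: "nat list \<times> nat list \<times> nat \<Rightarrow> nat list \<times> nat list \<times> nat \<Rightarrow> nat list \<times> nat list \<times> nat" where
  "vadd x y = (case x of (k, l, s) \<Rightarrow> case y of (k', l', s') \<Rightarrow>
       (map2 (+) k k', map2 (+) l l', s + s'))"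

text \<open>x - theta lies in C (subtraction in N^(p+q+1)), i.e. x = theta + y for some y in C.\<close>
definition diff_in_cone :: "nat list \<Rightarrow> nat list \<Rightarrow> nat list \<times> nat list \<times> nat \<Rightarrow>
    nat list \<times> nat list \<times> nat \<Rightarrow> bool" where
  "diff_in_cone \<alpha> \<beta> x \<theta> \<longleftrightarrow> (\<exists>y\<in>tcone \<alpha> \<beta>. x = vadd \<theta> y)"

end

theory Submission
  imports Defs
begin

text \<open>Writing \<open>x = \<theta> + y\<close>, the condition \<open>y \<in> C\<close> says exactly that \<open>x\<close> dominates \<open>\<theta>\<close>
  componentwise and that \<open>s - \<sigma>\<close> is at most both weighted sums of the differences, which
  is what the primed data express.\<close>

lemma wdot_int_map2_add:
  assumes "length \<kappa> = length w" "length y = length w"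
  shows "wdot_int w (map2 (+) \<kappa> y) \<kappa> = int (wdot w y)"
  using assms unfolding wdot_int_def wdot_def by (simp add: of_nat_sum)

lemma wdot_int_eq_wdot_map2_diff:
  assumes "list_all2 (\<le>) \<kappa> k" "length k = length w"
  shows "wdot_int w k \<kappa> = int (wdot w (map2 (-) k \<kappa>))"
  using assms unfolding wdot_int_def wdot_def
  by (auto simp: list_all2_conv_all_nth of_nat_sum of_nat_diff intro!: sum.cong)

lemma in_block_map2_max_iff:
  assumes "length \<kappa> = length a"
  shows "in_block (map2 max a (map int \<kappa>)) b k \<longleftrightarrow> in_block a b k \<and> list_all2 (\<le>) \<kappa> k"
  using assms unfolding in_block_def in_ival_def list_all2_conv_all_nth by auto

lemma map2_add_map2_diff:
  fixes \<kappa> k :: "nat list"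
  assumes "list_all2 (\<le>) \<kappa> k"
  shows "map2 (+) \<kappa> (map2 (-) k \<kappa>) = k"
  using assms by (intro nth_equalityI) (auto simp: list_all2_conv_all_nth)

lemma diff_in_cone_iff:
  assumes "length \<kappa> = length \<alpha>" "length lam = length \<beta>"
  shows "diff_in_cone \<alpha> \<beta> (k, l, s) (\<kappa>, lam, \<sigma>) \<longleftrightarrow>
           length k = length \<alpha> \<and> length l = length \<beta> \<and>
           list_all2 (\<le>) \<kappa> k \<and> list_all2 (\<le>) lam l \<and> \<sigma> \<le> s \<and>
           int s \<le> wdot_int \<alpha> k \<kappa> + int \<sigma> \<and> int s \<le> wdot_int \<beta> l lam + int \<sigma>"
    (is "?lhs \<longleftrightarrow> ?rhs")
proof
  assume ?lhs
  then obtain yk yl ys where y: "(yk, yl, ys) \<in> tcone \<alpha> \<beta>"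
    and k: "k = map2 (+) \<kappa> yk" and l: "l = map2 (+) lam yl" and s: "s = \<sigma> + ys"
    by (auto simp: diff_in_cone_def vadd_def)
  from y have "length yk = length \<alpha>" "length yl = length \<beta>"
    and "ys \<le> wdot \<alpha> yk" "ys \<le> wdot \<beta> yl"
    by (auto simp: tcone_def)
  with assms k l s show ?rhs
    by (auto simp: wdot_int_map2_add list_all2_conv_all_nth)
next
  assume r: ?rhs
  let ?y = "(map2 (-) k \<kappa>, map2 (-) l lam, s - \<sigma>)"
  have "?y \<in> tcone \<alpha> \<beta>"
    using r assms by (auto simp: tcone_def wdot_int_eq_wdot_map2_diff)
  moreover have "(k, l, s) = vadd (\<kappa>, lam, \<sigma>) ?y"
    using r by (simp add: vadd_def map2_add_map2_diff)
  ultimately show ?lhs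
    unfolding diff_in_cone_def by blast
qed

theorem theorem14p1:
  fixes p q :: nat
    and \<alpha> \<beta> :: "nat list"
    and a c :: "int list" and b d :: "int option list"
    and E F G H :: "nat list \<Rightarrow> int"
    and \<kappa> lam :: "nat list" and \<sigma> :: nat
  assumes "p \<ge> 1" and "q \<ge> 1"
    and "length \<alpha> = p" and "length \<beta> = q"
    and "length a = p" and "length b = p" and "length c = q" and "length d = q"
    and "\<And>k. in_block a b k \<Longrightarrow> F k \<le> int (wdot \<alpha> k)"
    and "\<And>l. in_block c d l \<Longrightarrow> H l \<le> int (wdot \<beta> l)"
    and "(\<kappa>, lam, \<sigma>) \<in> tcone \<alpha> \<beta>"
  shows "{x \<in> pmatrix a b c d E F G H. diff_in_cone \<alpha> \<beta> x (\<kappa>, lam, \<sigma>)} =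
         pmatrix (map2 max a (map int \<kappa>)) b (map2 max c (map int lam)) d
           (\<lambda>k. max (E k) (int \<sigma>))
           (\<lambda>k. min (F k) (wdot_int \<alpha> k \<kappa> + int \<sigma>))
           (\<lambda>l. max (G l) (int \<sigma>))
           (\<lambda>l. min (H l) (wdot_int \<beta> l lam + int \<sigma>))"
proof -
  have lengths: "length \<kappa> = length \<alpha>" "length lam = length \<beta>"
    using assms(11) by (auto simp: tcone_def)
  have block_lengths: "in_block a b k \<Longrightarrow> length k = length \<alpha>"
    "in_block c d l \<Longrightarrow> length l = length \<beta>" for k l
    using assms(3-5,7) by (auto simp: in_block_def)
  show ?thesis
    using lengths block_lengths assms(3-5,7)
    by (auto simp: pmatrix_def diff_in_cone_iff in_block_map2_max_iff)
qed

end
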